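(* Let $1<p\le 2$ and let $X$ be a separable Banach space having Azuma type $p$ with Azuma type constant $K_{p,X}$. Then for every $X$-valued conditionally symmetric martingale $f=(f_j)_{j=0}^{\infty}$ (relative to a filtration $(\mathscr{F}_j)_{j=0}^\infty$), every $\beta>0$ and every $0<\delta<\beta-1$, $$\mathbb{P}\{f^*>\beta\lambda,\ S_p(f)\le\delta\lambda\}\le 2\exp\left\{-\frac{(\beta-1-\delta)^p}{K_{p,X}\,\delta^p}\right\}\mathbb{P}\{f^*>\lambda\}$$ for all $\lambda>0$.
   Context: Notation: $d_{j,f}=f_j-f_{j-1}$, $f^*=\sup_{j\in\mathbb{N}}\|f_j-f_0\|$, $S_p(f)=(\sum_{j=1}^\infty\|d_{j,f}\|^p)^{1/p}$; all filtrations have trivial $\mathscr{F}_0$. A martingale $f$ is conditionally symmetric if $\mathbb{E}\varphi(d_{1,f},\dots,d_{j-1,f},d_{j,f})=\mathbb{E}\varphi(d_{1,f},\dots,d_{j-1,f},-d_{j,f})$ for all bounded continuous $\varphi:X^j\to\mathbb{R}$ and all $j$. A Banach space $X$ has Azuma type $p$ if there is $K>0$ such that for every $X$-valued martingale $f$ (relative to any filtration) and every nonnegative predictable sequence $w=(w_j)_{j\ge1}$ ($w_j$ is $\mathscr{F}_{j-1}$-measurable) with $\|d_{j,f}\|\le w_j$ for all $j$, one has for all $r>0$: $\mathbb{P}\{f^*\ge r\}\le 2\exp\{-r^p/(K\|\sum_{j=1}^\infty w_j^p\|_\infty)\}$. The smallest such $K$ is the Azuma type constant $K_{p,X}$. 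*)

theory Defs
  imports "HOL-Probability.Probability"
begin

definition filtration_on :: "'w measure \<Rightarrow> (nat \<Rightarrow> 'w measure) \<Rightarrow> bool" where
  "filtration_on M F \<longleftrightarrow>
     (\<forall>j. space (F j) = space M \<and> sets (F j) \<subseteq> sets M) \<and>
     (\<forall>j. sets (F j) \<subseteq> sets (F (Suc j))) \<and>
     sets (F 0) = {{}, space M}"

text \<open>X-valued martingale: adapted, Bochner integrable, and
  E[f (j+1) | F j] = f j, i.e. equal integrals over every set of F j.\<close>
definition martingale_on :: "'w measure \<Rightarrow> (nat \<Rightarrow> 'w measure) \<Rightarrow> (nat \<Rightarrow> 'w \<Rightarrow> 'x::{banach,second_countable_topology}) \<Rightarrow> bool" where
  "martingale_on M F f \<longleftrightarrow>
     (\<forall>j. f j \<in> borel_measurable (F j) \<and> integrable M (f j) \<and>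
          (\<forall>A\<in>sets (F j). set_lebesgue_integral M A (f (Suc j)) = set_lebesgue_integral M A (f j)))"

text \<open>Martingale difference d_{j,f} = f_j - f_{j-1} (meaningful for j \<ge> 1).\<close>
definition mdiff :: "(nat \<Rightarrow> 'w \<Rightarrow> 'x::{banach,second_countable_topology}) \<Rightarrow> nat \<Rightarrow> 'w \<Rightarrow> 'x" where
  "mdiff f j \<omega> = f j \<omega> - f (j - 1) \<omega>"

definition mstar :: "(nat \<Rightarrow> 'w \<Rightarrow> 'x::{banach,second_countable_topology}) \<Rightarrow> 'w \<Rightarrow> ennreal" where
  "mstar f \<omega> = (SUP j. ennreal (norm (f j \<omega> - f 0 \<omega>)))"

definition Sp :: "real \<Rightarrow> (nat \<Rightarrow> 'w \<Rightarrow> 'x::{banach,second_countable_topology}) \<Rightarrow> 'w \<Rightarrow> ennreal" where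
  "Sp p f \<omega> =
     (let s = (\<Sum>j. ennreal (norm (mdiff f (Suc j) \<omega>) powr p))
      in if s = \<top> then \<top> else ennreal (enn2real s powr (1 / p)))"

text \<open>Conditional symmetry, with X^j represented by functions nat \<Rightarrow> X (product topology)
  that depend only on the coordinates 1..j.\<close>
definition cond_symmetric :: "'w measure \<Rightarrow> (nat \<Rightarrow> 'w \<Rightarrow> 'x::{banach,second_countable_topology}) \<Rightarrow> bool" where
  "cond_symmetric M f \<longleftrightarrow>
     (\<forall>j\<ge>1. \<forall>\<phi> :: (nat \<Rightarrow> 'x) \<Rightarrow> real.
        continuous_on UNIV \<phi> \<and> bounded (range \<phi>) \<and>
        (\<forall>x y. (\<forall>i\<in>{1..j}. x i = y i) \<longrightarrow> \<phi> x = \<phi> y) \<longrightarrow>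
        (\<integral>\<omega>. \<phi> (\<lambda>i. mdiff f i \<omega>) \<partial>M) =
        (\<integral>\<omega>. \<phi> ((\<lambda>i. mdiff f i \<omega>)(j := - mdiff f j \<omega>)) \<partial>M))"

text \<open>Right-hand side 2 exp(-r^p / (K S)) of the Azuma inequality, where S = \<parallel>\<Sum> w_j^p\<parallel>_\<infinity>
  in [0,\<infinity>]; conventions: S = 0 gives 0 (exp(-\<infinity>)), S = \<infinity> gives 2 (exp 0).\<close>
definition azuma_bound :: "real \<Rightarrow> real \<Rightarrow> ennreal \<Rightarrow> real \<Rightarrow> real" where
  "azuma_bound p K S r =
     (if S = 0 then 0 else if S = \<top> then 2
      else 2 * exp (- (r powr p) / (K * enn2real S)))"

definition azuma_K :: "'w itself \<Rightarrow> 'x::{banach,second_countable_topology} itself \<Rightarrow> real \<Rightarrow> real \<Rightarrow> bool" where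
  "azuma_K TW TX p K \<longleftrightarrow> K > 0 \<and>
     (\<forall>(M :: 'w measure) F (f :: nat \<Rightarrow> 'w \<Rightarrow> 'x) (w :: nat \<Rightarrow> 'w \<Rightarrow> real).
        prob_space M \<and> filtration_on M F \<and> martingale_on M F f \<and>
        (\<forall>j\<ge>1. w j \<in> borel_measurable (F (j - 1)) \<and> (\<forall>\<omega>\<in>space M. w j \<omega> \<ge> 0)) \<and>
        (\<forall>j\<ge>1. AE \<omega> in M. norm (mdiff f j \<omega>) \<le> w j \<omega>)
        \<longrightarrow> (\<forall>r>0. measure M {\<omega>\<in>space M. ennreal r \<le> mstar f \<omega>}
                   \<le> azuma_bound p K (esssup M (\<lambda>\<omega>. \<Sum>j. ennreal (w (Suc j) \<omega> powr p))) r))"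

definition has_azuma_type :: "'w itself \<Rightarrow> 'x::{banach,second_countable_topology} itself \<Rightarrow> real \<Rightarrow> bool" where
  "has_azuma_type TW TX p \<longleftrightarrow> (\<exists>K. azuma_K TW TX p K)"

definition azuma_const :: "'w itself \<Rightarrow> 'x::{banach,second_countable_topology} itself \<Rightarrow> real \<Rightarrow> real" where
  "azuma_const TW TX p = Inf {K. azuma_K TW TX p K}"

end

theory Submission
  imports Defs
begin

text \<open>A good-lambda argument. Decompose the event f* > lam according to the first time k at
  which the norm of f_k - f_0 exceeds lam. If moreover S_p(f) <= delta lam, the jump at time k
  is at most delta lam, so reaching beta lam forces the tail f_m - f_k to exceed
  (beta - 1 - delta) lam. After time k, replace the differences by zero from the first time
  their p-th power sum exceeds (delta lam)^p. Conditionally on the exit event these truncated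
  differences form a martingale for the filtration generated by d_1, ..., d_n and the norm of
  d_(n+1), because conditional symmetry hides the sign of d_(n+1) from this filtration; their
  norms are predictable, with p-th power sum at most (delta lam)^p. Azuma's inequality then
  bounds the conditional probability by 2 exp(-(beta - 1 - delta)^p / (K delta^p)); summing
  over k and letting K decrease to the Azuma constant gives the theorem.\<close>

lemma tendsto_indicator_closed_infdist:
  fixes C :: "'a::metric_space set"
  assumes C: "closed C" and ne: "C \<noteq> {}"
  shows "(\<lambda>m. max 0 (1 - real m * infdist x C)) \<longlonglongrightarrow> indicator C x"
proof (cases "x \<in> C")
  case True
  then show ?thesis using in_closed_iff_infdist_zero[OF C ne] by simp
next
  case False
  then have pos: "infdist x C > 0"
    using in_closed_iff_infdist_zero[OF C ne] infdist_nonneg[of x C] by auto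
  obtain N :: nat where N: "1 / infdist x C < real N" using reals_Archimedean2 by blast
  have "1 < real m * infdist x C" if "N \<le> m" for m
    using N pos that by (smt (verit) divide_less_eq mult_right_mono of_nat_le_iff)
  then have "eventually (\<lambda>m. max 0 (1 - real m * infdist x C) = indicator C x) sequentially"
    unfolding eventually_sequentially using False by (auto intro!: exI[of _ N])
  then show ?thesis by (rule tendsto_eventually)
qed

lemma finite_borel_measure_eqI_continuous:
  fixes \<mu>1 \<mu>2 :: "'a::metric_space measure"
  assumes s1: "sets \<mu>1 = sets borel" and s2: "sets \<mu>2 = sets borel"
    and f1: "finite_measure \<mu>1" and f2: "finite_measure \<mu>2"
    and eq: "\<And>\<phi> :: 'a \<Rightarrow> real. continuous_on UNIV \<phi> \<Longrightarrow> (\<And>x. 0 \<le> \<phi> x \<and> \<phi> x \<le> 1) \<Longrightarrow>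
              integral\<^sup>L \<mu>1 \<phi> = integral\<^sup>L \<mu>2 \<phi>"
  shows "\<mu>1 = \<mu>2"
proof (rule measure_eqI_generator_eq[where E="Collect closed" and \<Omega>=UNIV and A="\<lambda>_. UNIV"])
  show "Int_stable (Collect closed)" by (auto simp: Int_stable_def)
  show "sets \<mu>1 = sigma_sets UNIV (Collect closed)" "sets \<mu>2 = sigma_sets UNIV (Collect closed)"
    using s1 s2 by (simp_all add: borel_eq_closed)
  show "emeasure \<mu>1 UNIV \<noteq> \<infinity>" for i :: nat
    using finite_measure.emeasure_finite[OF f1] by simp
  fix C :: "'a set" assume "C \<in> Collect closed"
  then have C: "closed C" by simp
  show "emeasure \<mu>1 C = emeasure \<mu>2 C"
  proof (cases "C = {}")
    case False
    define \<phi> where "\<phi> m x = max 0 (1 - real m * infdist x C)" for m :: nat and x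
    have cont: "continuous_on UNIV (\<phi> m)" for m
      unfolding \<phi>_def by (intro continuous_intros)
    have rng: "0 \<le> \<phi> m x \<and> \<phi> m x \<le> 1" for m x
      unfolding \<phi>_def using infdist_nonneg[of x C] by auto
    have lim: "(\<lambda>m. \<phi> m x) \<longlonglongrightarrow> indicator C x" for x
      unfolding \<phi>_def by (rule tendsto_indicator_closed_infdist[OF C False])
    have L: "(\<lambda>m. integral\<^sup>L \<mu> (\<phi> m)) \<longlonglongrightarrow> measure \<mu> C"
      if fm: "finite_measure \<mu>" and s: "sets \<mu> = sets borel" for \<mu> :: "'a measure"
    proof -
      have "(\<lambda>m. integral\<^sup>L \<mu> (\<phi> m)) \<longlonglongrightarrow> integral\<^sup>L \<mu> (indicator C)"
      proof (rule integral_dominated_convergence[where w="\<lambda>_. 1"])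
        show "indicator C \<in> borel_measurable \<mu>"
          using s C by (intro borel_measurable_indicator) (simp add: borel_closed)
        show "\<phi> m \<in> borel_measurable \<mu>" for m
          using borel_measurable_continuous_onI[OF cont] by (simp add: measurable_cong_sets[OF s refl])
        show "integrable \<mu> (\<lambda>_. 1::real)" using fm by (simp add: finite_measure.integrable_const)
      qed (use lim rng in simp_all)
      moreover have "C \<in> sets \<mu>" using s C by (simp add: borel_closed)
      ultimately show ?thesis by simp
    qed
    have "measure \<mu>1 C = measure \<mu>2 C"
      using LIMSEQ_unique[OF L[OF f1 s1]] L[OF f2 s2] eq[OF cont rng] by simp
    then show ?thesis
      using finite_measure.emeasure_eq_measure[OF f1] finite_measure.emeasure_eq_measure[OF f2] by simp
  qed simp
qed auto

lemma le_at_Inf_if_isCont: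
  fixes g :: "real \<Rightarrow> real"
  assumes "S \<noteq> {}" "bdd_below S" "isCont g (Inf S)" "\<And>K. K \<in> S \<Longrightarrow> L \<le> g K"
  shows "L \<le> g (Inf S)"
proof -
  obtain K where K: "\<And>n. K n \<in> S" "K \<longlonglongrightarrow> Inf S"
    using closure_contains_Inf[OF assms(1,2)] unfolding closure_sequential by blast
  have "(\<lambda>n. g (K n)) \<longlonglongrightarrow> g (Inf S)"
    using isCont_tendsto_compose[OF assms(3) K(2)] .
  then show ?thesis
    using assms(4)[OF K(1)] by (intro LIMSEQ_le_const) auto
qed

text \<open>If the infimum is 0, the bound degenerates to 2 P, since division by zero yields zero.\<close>
lemma le_exp_bound_at_Inf:
  fixes S :: "real set"
  assumes S: "S \<noteq> {}" and pos: "\<And>K. K \<in> S \<Longrightarrow> 0 < K"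
    and bound: "\<And>K. K \<in> S \<Longrightarrow> L \<le> 2 * exp (- a / (K * d)) * P"
    and a: "0 \<le> a" and d: "0 < d" and P: "0 \<le> P"
  shows "L \<le> 2 * exp (- a / (Inf S * d)) * P"
proof -
  have "0 \<le> Inf S" using S pos by (meson cInf_greatest less_imp_le)
  then consider "Inf S = 0" | "0 < Inf S" by linarith
  then show ?thesis
  proof cases
    case 1
    obtain K where K: "K \<in> S" using S by blast
    have "exp (- a / (K * d)) \<le> 1" using pos[OF K] a d by simp
    from mult_right_mono[OF this P] show ?thesis using bound[OF K] 1 by simp
  next
    case 2
    have "bdd_below S" using pos by (meson bdd_belowI less_imp_le)
    moreover have "isCont (\<lambda>K. 2 * exp (- a / (K * d)) * P) (Inf S)"
      using 2 d by (intro continuous_intros) auto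
    ultimately show ?thesis using le_at_Inf_if_isCont[OF S] bound by blast
  qed
qed

lemma (in finite_measure) measure_le_mult_if_disjoint_cover:
  fixes A :: "nat \<Rightarrow> 'a set"
  assumes disj: "disjoint_family A" and A: "\<And>k. A k \<in> sets M"
    and E: "E \<in> sets M" "E \<subseteq> (\<Union>k. A k)"
    and le: "\<And>k. measure M (E \<inter> A k) \<le> B * measure M (A k)"
  shows "measure M E \<le> B * measure M (\<Union>k. A k)"
proof -
  have "(\<lambda>k. measure M (E \<inter> A k)) sums measure M (\<Union>k. E \<inter> A k)"
    using disj A E by (intro finite_measure_UNION) (auto simp: disjoint_family_on_def)
  moreover have "(\<Union>k. E \<inter> A k) = E" using E(2) by blast
  moreover have "(\<lambda>k. measure M (A k)) sums measure M (\<Union>k. A k)"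
    using disj A by (intro finite_measure_UNION) auto
  ultimately show ?thesis by (intro sums_le[OF le _ sums_mult]) simp_all
qed

lemma (in prob_space) integral_uniform_measure:
  fixes g :: "'a \<Rightarrow> 'b::{banach,second_countable_topology}"
  assumes A: "A \<in> events" and P: "0 < prob A" and [measurable]: "g \<in> borel_measurable M"
  shows "(\<integral>x. g x \<partial>uniform_measure M A) = (\<integral>x. (indicator A x / prob A) *\<^sub>R g x \<partial>M)"
proof -
  have "(\<lambda>x. indicator A x / emeasure M A) = (\<lambda>x. ennreal (indicator A x / prob A))"
  proof
    show "indicator A x / emeasure M A = ennreal (indicator A x / prob A)" for x
      using P by (cases "x \<in> A") (simp_all add: emeasure_eq_measure divide_ennreal[symmetric])
  qed
  then show ?thesis unfolding uniform_measure_def using A by (simp add: integral_density)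
qed

lemma (in prob_space) integrable_uniform_measure_bounded:
  fixes g :: "'a \<Rightarrow> 'b::{banach,second_countable_topology}"
  assumes A: "A \<in> events" and P: "0 < prob A" and g: "g \<in> borel_measurable M"
    and bound: "\<And>x. norm (g x) \<le> B"
  shows "integrable (uniform_measure M A) g"
proof -
  interpret U: prob_space "uniform_measure M A"
    using A P by (intro prob_space_uniform_measure) (auto simp: emeasure_eq_measure)
  show ?thesis using g bound by (intro U.integrable_const_bound[where B=B]) auto
qed

lemma borel_measurable_fst_borel[measurable]:
  "fst \<in> borel_measurable (borel :: ('a::topological_space \<times> 'b::topological_space) measure)"
  by (intro borel_measurable_continuous_onI continuous_intros)

lemma borel_measurable_snd_borel[measurable]:
  "snd \<in> borel_measurable (borel :: ('a::topological_space \<times> 'b::topological_space) measure)"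
  by (intro borel_measurable_continuous_onI continuous_intros)

definition seq_prefix :: "nat \<Rightarrow> (nat \<Rightarrow> 'x::zero) \<Rightarrow> nat \<Rightarrow> 'x" where
  "seq_prefix n x = (\<lambda>i. if 1 \<le> i \<and> i \<le> n then x i else 0)"

lemma seq_prefix_seq_prefix: "m \<le> n \<Longrightarrow> seq_prefix m (seq_prefix n x) = seq_prefix m x"
  by (auto simp: seq_prefix_def)

lemma seq_prefix_apply: "1 \<le> i \<Longrightarrow> i \<le> n \<Longrightarrow> seq_prefix n x i = x i"
  by (simp add: seq_prefix_def)

lemma seq_prefix_eqI: "(\<And>i. 1 \<le> i \<Longrightarrow> i \<le> n \<Longrightarrow> x i = y i) \<Longrightarrow> seq_prefix n x = seq_prefix n y"
  by (auto simp: seq_prefix_def)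

lemma continuous_on_seq_prefix:
  "continuous_on UNIV (seq_prefix n :: (nat \<Rightarrow> 'x::real_normed_vector) \<Rightarrow> _)"
  unfolding seq_prefix_def
proof (intro continuous_on_coordinatewise_then_product)
  show "continuous_on UNIV (\<lambda>x::nat \<Rightarrow> 'x. if 1 \<le> i \<and> i \<le> n then x i else 0)" for i
    by (cases "1 \<le> i \<and> i \<le> n")
      (simp_all only: simp_thms if_True if_False continuous_on_product_coordinates continuous_on_const)
qed

lemma borel_measurable_seq_prefix[measurable]:
  "seq_prefix n \<in> borel_measurable (borel :: (nat \<Rightarrow> 'x::{real_normed_vector,second_countable_topology}) measure)"
  by (rule borel_measurable_continuous_onI[OF continuous_on_seq_prefix])

definition first_exit :: "real \<Rightarrow> nat \<Rightarrow> (nat \<Rightarrow> real) \<Rightarrow> bool" where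
  "first_exit lam k s \<longleftrightarrow> lam < s k \<and> (\<forall>j<k. s j \<le> lam)"

lemma first_exit_unique: "first_exit lam k s \<Longrightarrow> first_exit lam m s \<Longrightarrow> k = m"
  unfolding first_exit_def by (metis linorder_neqE_nat not_le)

lemma ex_first_exit_iff: "(\<exists>k. first_exit lam k s) \<longleftrightarrow> (\<exists>j. lam < s j)"
proof
  assume "\<exists>j. lam < s j"
  then have "first_exit lam (LEAST j. lam < s j) s"
    unfolding first_exit_def by (metis LeastI not_less_Least not_le)
  then show "\<exists>k. first_exit lam k s" ..
qed (auto simp: first_exit_def)

lemma first_exit_cong:
  "(\<And>j. j \<le> k \<Longrightarrow> s j = t j) \<Longrightarrow> first_exit lam k s = first_exit lam k t"
  by (simp add: first_exit_def)

lemma first_exit_overshoot: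
  fixes s :: "nat \<Rightarrow> 'a::real_normed_vector"
  assumes exit: "first_exit lam k (\<lambda>j. norm (s j))" and k: "0 < k"
    and jump: "norm (s k - s (k - 1)) \<le> d" and m: "b < norm (s m)" and b: "lam + d \<le> b"
  shows "k < m \<and> b - lam - d < norm (s m - s k)"
proof -
  have before: "norm (s j) \<le> lam" if "j < k" for j using exit that by (simp add: first_exit_def)
  have "norm (s k) \<le> norm (s (k - 1)) + norm (s k - s (k - 1))"
    using norm_triangle_sub[of "s k" "s (k - 1)"] by simp
  then have sk: "norm (s k) \<le> lam + d" using before[of "k - 1"] k jump by simp
  have "0 \<le> d" using jump norm_ge_zero order_trans by blast
  have "\<not> m \<le> k"
  proof
    assume "m \<le> k"
    then have "norm (s m) \<le> lam + d"
      using before[of m] sk \<open>0 \<le> d\<close> by (cases "m = k") simp_all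
    with m b show False by simp
  qed
  then have "k < m" by simp
  moreover have "norm (s m) - norm (s k) \<le> norm (s m - s k)" by (rule norm_triangle_ineq2)
  ultimately show ?thesis using sk m by simp
qed

lemma pred_first_exit_partial_sums[measurable]:
  "Measurable.pred borel (\<lambda>x :: nat \<Rightarrow> 'x::{real_normed_vector,second_countable_topology}. first_exit lam k (\<lambda>j. norm (\<Sum>l\<in>{1..j}. x l)))"
  unfolding first_exit_def by measurable

definition pvar_le :: "real \<Rightarrow> real \<Rightarrow> nat \<Rightarrow> (nat \<Rightarrow> 'x::real_normed_vector) \<Rightarrow> bool" where
  "pvar_le p c i x \<longleftrightarrow> (\<Sum>l\<in>{1..i}. norm (x l) powr p) \<le> c"

definition pvar_le_next :: "real \<Rightarrow> real \<Rightarrow> nat \<Rightarrow> (nat \<Rightarrow> 'x::real_normed_vector) \<times> real \<Rightarrow> bool" where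
  "pvar_le_next p c n z \<longleftrightarrow> (\<Sum>l\<in>{1..n}. norm (fst z l) powr p) + snd z powr p \<le> c"

lemma pred_pvar_le[measurable]:
  "Measurable.pred (borel :: (nat \<Rightarrow> 'x::{real_normed_vector,second_countable_topology}) measure) (pvar_le p c i)"
  unfolding pvar_le_def[abs_def] by measurable

lemma pred_pvar_le_next[measurable]:
  "Measurable.pred (borel :: ((nat \<Rightarrow> 'x::{real_normed_vector,second_countable_topology}) \<times> real) measure)
     (pvar_le_next p c n)"
proof -
  have F: "(\<lambda>x::nat \<Rightarrow> 'x. \<Sum>l\<in>{1..n}. norm (x l) powr p) \<in> borel_measurable borel"
    by measurable
  have G: "(\<lambda>t::real. t powr p) \<in> borel_measurable borel" by measurable
  have H: "(\<lambda>z. (\<Sum>l\<in>{1..n}. norm (fst z l) powr p) + snd z powr p)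
      \<in> borel_measurable (borel :: ((nat \<Rightarrow> 'x) \<times> real) measure)"
    by (rule borel_measurable_add[OF measurable_compose[OF borel_measurable_fst_borel F]
        measurable_compose[OF borel_measurable_snd_borel G]])
  then show ?thesis unfolding pvar_le_next_def[abs_def] by measurable
qed

lemma pvar_le_seq_prefix: "i \<le> n \<Longrightarrow> pvar_le p c i (seq_prefix n x) = pvar_le p c i x"
  unfolding pvar_le_def by (intro arg_cong2[where f="(\<le>)"] sum.cong) (auto simp: seq_prefix_apply)

lemma pvar_le_next_seq_prefix:
  "pvar_le_next p c n (seq_prefix n x, norm (x (Suc n))) = pvar_le p c (Suc n) x"
proof -
  have "(\<Sum>l\<in>{1..n}. norm (seq_prefix n x l) powr p) = (\<Sum>l\<in>{1..n}. norm (x l) powr p)"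
    by (intro sum.cong) (auto simp: seq_prefix_apply)
  then show ?thesis by (simp add: pvar_le_next_def pvar_le_def)
qed

lemma sum_pvar_le_powr_le:
  assumes "0 \<le> c"
  shows "(\<Sum>i\<in>{1..N}. if pvar_le p c i x then norm (x i) powr p else 0) \<le> c"
proof -
  have "(\<Sum>i\<in>{1..N}. if pvar_le p c i x then norm (x i) powr p else 0) \<le> (\<Sum>i\<in>{1..N}. norm (x i) powr p) \<and>
        (\<Sum>i\<in>{1..N}. if pvar_le p c i x then norm (x i) powr p else 0) \<le> c"
  proof (induction N)
    case (Suc N)
    show ?case
    proof (cases "pvar_le p c (Suc N) x")
      case True
      then have "(\<Sum>i\<in>{1..Suc N}. norm (x i) powr p) \<le> c" by (simp add: pvar_le_def)
      then show ?thesis using Suc True by simp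
    next
      case False
      have "0 \<le> norm (x (Suc N)) powr p" by simp
      then show ?thesis using Suc False by (simp; linarith)
    qed
  qed (use assms in simp)
  then show ?thesis ..
qed

lemma less_mstar_iff:
  assumes "0 \<le> a"
  shows "ennreal a < mstar f \<omega> \<longleftrightarrow> (\<exists>j. a < norm (f j \<omega> - f 0 \<omega>))"
  using assms by (simp add: mstar_def less_SUP_iff ennreal_less_iff)

lemma sum_mdiff: "k \<le> m \<Longrightarrow> (\<Sum>l\<in>{Suc k..m}. mdiff f l \<omega>) = f m \<omega> - f k \<omega>"
  unfolding mdiff_def by (rule sum_telescope'')

lemma sum_norm_mdiff_powr_le_if_Sp_le:
  assumes p: "0 < p" and a: "0 \<le> a" and Sp: "Sp p f \<omega> \<le> ennreal a"
  shows "(\<Sum>l\<in>{1..i}. norm (mdiff f l \<omega>) powr p) \<le> a powr p"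
proof -
  define s where "s = (\<Sum>j. ennreal (norm (mdiff f (Suc j) \<omega>) powr p))"
  have "s \<noteq> \<top>" using Sp by (auto simp: Sp_def s_def Let_def top_unique)
  then have "enn2real s powr (1 / p) \<le> a" and s: "s = ennreal (enn2real s)"
    using Sp a by (simp_all add: Sp_def s_def Let_def)
  then have "(enn2real s powr (1 / p)) powr p \<le> a powr p"
    using p by (intro powr_mono2) auto
  then have sa: "enn2real s \<le> a powr p" using p by (simp add: powr_powr)
  have "ennreal (\<Sum>j<i. norm (mdiff f (Suc j) \<omega>) powr p) = (\<Sum>j<i. ennreal (norm (mdiff f (Suc j) \<omega>) powr p))"
    by simp
  also have "\<dots> \<le> s" unfolding s_def by (rule sum_le_suminf) auto
  finally have "ennreal (\<Sum>j<i. norm (mdiff f (Suc j) \<omega>) powr p) \<le> s" .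
  then have "(\<Sum>j<i. norm (mdiff f (Suc j) \<omega>) powr p) \<le> enn2real s"
    by (subst (asm) s) simp
  then show ?thesis using sa by (simp add: sum.atLeast1_atMost_eq)
qed

lemma azuma_bound_le:
  assumes S: "S \<le> ennreal c" and c: "0 < c" and K: "0 < K"
  shows "azuma_bound p K S r \<le> 2 * exp (- (r powr p) / (K * c))"
proof (cases "S = 0")
  case False
  obtain s where s: "S = ennreal s" "0 \<le> s"
    using S by (metis ennreal_cases ennreal_neq_top neq_top_trans)
  have "0 < s" "s \<le> c" using False s S c by auto
  then have "r powr p / (K * c) \<le> r powr p / (K * s)"
    using K by (intro divide_left_mono) auto
  then show ?thesis using False s by (simp add: azuma_bound_def)
qed (simp add: azuma_bound_def)

lemma azuma_K_pos: "azuma_K TW TX p K \<Longrightarrow> 0 < K"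
  by (simp add: azuma_K_def)

lemma azuma_KD:
  fixes M :: "'w measure" and f :: "nat \<Rightarrow> 'w \<Rightarrow> 'x::{banach,second_countable_topology}"
  assumes K: "azuma_K TYPE('w) TYPE('x) p K"
    and "prob_space M" "filtration_on M F" "martingale_on M F f"
    and "\<And>j. 1 \<le> j \<Longrightarrow> w j \<in> borel_measurable (F (j - 1))"
    and "\<And>j \<omega>. 1 \<le> j \<Longrightarrow> \<omega> \<in> space M \<Longrightarrow> 0 \<le> w j \<omega>"
    and "\<And>j. 1 \<le> j \<Longrightarrow> AE \<omega> in M. norm (mdiff f j \<omega>) \<le> w j \<omega>"
    and r: "0 < r"
  shows "measure M {\<omega>\<in>space M. ennreal r \<le> mstar f \<omega>}
      \<le> azuma_bound p K (esssup M (\<lambda>\<omega>. \<Sum>j. ennreal (w (Suc j) \<omega> powr p))) r"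
proof -
  have "prob_space M \<and> filtration_on M F \<and> martingale_on M F f \<and>
      (\<forall>j\<ge>1. w j \<in> borel_measurable (F (j - 1)) \<and> (\<forall>\<omega>\<in>space M. w j \<omega> \<ge> 0)) \<and>
      (\<forall>j\<ge>1. AE \<omega> in M. norm (mdiff f j \<omega>) \<le> w j \<omega>)"
    using assms(2-7) by auto
  from azuma_K_def[THEN iffD1, OF K, THEN conjunct2, rule_format, OF this r] show ?thesis .
qed

section \<open>Conditionally symmetric sequences\<close>

locale cond_symmetric_seq = prob_space M
  for M :: "'w measure" and f :: "nat \<Rightarrow> 'w \<Rightarrow> 'x::{banach,second_countable_topology}" +
  assumes cond_symmetric: "cond_symmetric M f"
    and borel_measurable_f[measurable]: "\<And>j. f j \<in> borel_measurable M"
begin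

definition diffs :: "'w \<Rightarrow> nat \<Rightarrow> 'x" where
  "diffs \<omega> = (\<lambda>i. mdiff f i \<omega>)"

lemma borel_measurable_mdiff[measurable]: "mdiff f j \<in> borel_measurable M"
  unfolding mdiff_def[abs_def] by measurable

lemma borel_measurable_diffs[measurable]: "diffs \<in> borel_measurable M"
  unfolding diffs_def by (rule measurable_coordinatewise_then_product) simp

lemma borel_measurable_flip_diffs[measurable]:
  "(\<lambda>\<omega>. (diffs \<omega>)(j := - diffs \<omega> j)) \<in> borel_measurable M"
proof (rule measurable_coordinatewise_then_product)
  show "(\<lambda>\<omega>. ((diffs \<omega>)(j := - diffs \<omega> j)) i) \<in> borel_measurable M" for i
    by (cases "i = j") (simp_all add: diffs_def)
qed

lemma distr_seq_prefix_flip: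
  assumes j: "1 \<le> j"
  shows "distr M borel (\<lambda>\<omega>. seq_prefix j (diffs \<omega>)) =
         distr M borel (\<lambda>\<omega>. seq_prefix j ((diffs \<omega>)(j := - diffs \<omega> j)))"
proof (rule finite_borel_measure_eqI_continuous)
  fix \<phi> :: "(nat \<Rightarrow> 'x) \<Rightarrow> real"
  assume cont: "continuous_on UNIV \<phi>" and rng: "\<And>x. 0 \<le> \<phi> x \<and> \<phi> x \<le> 1"
  have [measurable]: "\<phi> \<in> borel_measurable borel" by (rule borel_measurable_continuous_onI[OF cont])
  have "continuous_on UNIV (\<lambda>x. \<phi> (seq_prefix j x))"
    by (rule continuous_on_compose2[OF cont continuous_on_seq_prefix]) auto
  moreover have "bounded (range (\<lambda>x. \<phi> (seq_prefix j x)))"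
    unfolding bounded_iff using rng by (intro exI[of _ 1]) auto
  moreover have "\<forall>x y. (\<forall>i\<in>{1..j}. x i = y i) \<longrightarrow> \<phi> (seq_prefix j x) = \<phi> (seq_prefix j y)"
    by (metis atLeastAtMost_iff seq_prefix_eqI)
  ultimately have "(\<integral>\<omega>. \<phi> (seq_prefix j (diffs \<omega>)) \<partial>M) =
      (\<integral>\<omega>. \<phi> (seq_prefix j ((diffs \<omega>)(j := - diffs \<omega> j))) \<partial>M)"
    using cond_symmetric j unfolding cond_symmetric_def diffs_def by blast
  then show "integral\<^sup>L (distr M borel (\<lambda>\<omega>. seq_prefix j (diffs \<omega>))) \<phi> =
      integral\<^sup>L (distr M borel (\<lambda>\<omega>. seq_prefix j ((diffs \<omega>)(j := - diffs \<omega> j)))) \<phi>"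
    by (simp add: integral_distr)
qed (simp_all add: finite_measure_distr)

text \<open>The sign of the next difference can be flipped without changing the joint law of the
  past differences and of its norm, so the integral equals its own negative.\<close>
lemma integral_next_diff_eq_0:
  fixes G :: "(nat \<Rightarrow> 'x) \<times> real \<Rightarrow> real"
  assumes [measurable]: "G \<in> borel_measurable borel"
  shows "(\<integral>\<omega>. G (seq_prefix n (diffs \<omega>), norm (diffs \<omega> (Suc n))) *\<^sub>R diffs \<omega> (Suc n) \<partial>M) = 0"
    (is "?I = 0")
proof -
  define G' where "G' x = G (seq_prefix n x, norm (x (Suc n))) *\<^sub>R x (Suc n)" for x :: "nat \<Rightarrow> 'x"
  have [measurable]: "G' \<in> borel_measurable borel" unfolding G'_def[abs_def] by measurable
  have "?I = (\<integral>\<omega>. G' (seq_prefix (Suc n) (diffs \<omega>)) \<partial>M)"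
    by (simp add: G'_def seq_prefix_seq_prefix seq_prefix_apply)
  also have "\<dots> = integral\<^sup>L (distr M borel (\<lambda>\<omega>. seq_prefix (Suc n) (diffs \<omega>))) G'"
    by (simp add: integral_distr)
  also have "\<dots> = integral\<^sup>L (distr M borel (\<lambda>\<omega>. seq_prefix (Suc n) ((diffs \<omega>)(Suc n := - diffs \<omega> (Suc n))))) G'"
    by (simp only: distr_seq_prefix_flip)
  also have "\<dots> = (\<integral>\<omega>. G' (seq_prefix (Suc n) ((diffs \<omega>)(Suc n := - diffs \<omega> (Suc n)))) \<partial>M)"
    by (simp add: integral_distr)
  also have "\<dots> = - ?I"
  proof -
    have "seq_prefix n ((diffs \<omega>)(Suc n := y)) = seq_prefix n (diffs \<omega>)" for \<omega> y
      by (rule seq_prefix_eqI) simp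
    then show ?thesis by (simp add: G'_def seq_prefix_seq_prefix seq_prefix_apply)
  qed
  finally have flip: "?I = - ?I" .
  have "(2::real) *\<^sub>R ?I = ?I + ?I" by (rule scaleR_2)
  also have "\<dots> = 0" by (subst (2) flip) simp
  finally have "(2::real) *\<^sub>R ?I = 0" .
  then show ?thesis by simp
qed

definition exit_set :: "real \<Rightarrow> nat \<Rightarrow> 'w set" where
  "exit_set lam k = {\<omega>\<in>space M. first_exit lam k (\<lambda>j. norm (f j \<omega> - f 0 \<omega>))}"

lemma exit_set_eq_seq_prefix:
  "exit_set lam k = {\<omega>\<in>space M. first_exit lam k (\<lambda>j. norm (\<Sum>l\<in>{1..j}. seq_prefix k (diffs \<omega>) l))}"
proof -
  have "(\<Sum>l\<in>{1..j}. seq_prefix k (diffs \<omega>) l) = f j \<omega> - f 0 \<omega>" if "j \<le> k" for j \<omega>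
    using that sum_mdiff[of 0 j f \<omega>] by (simp add: seq_prefix_apply diffs_def)
  then have "first_exit lam k (\<lambda>j. norm (f j \<omega> - f 0 \<omega>))
      = first_exit lam k (\<lambda>j. norm (\<Sum>l\<in>{1..j}. seq_prefix k (diffs \<omega>) l))" for \<omega>
    by (intro first_exit_cong) simp
  then show ?thesis unfolding exit_set_def by simp
qed

lemma exit_set_measurable[measurable]: "exit_set lam k \<in> events"
  unfolding exit_set_eq_seq_prefix by measurable

lemma disjoint_family_exit_set: "disjoint_family (exit_set lam)"
  unfolding disjoint_family_on_def exit_set_def using first_exit_unique by blast

lemma Union_exit_set:
  assumes "0 \<le> lam"
  shows "(\<Union>k. exit_set lam k) = {\<omega>\<in>space M. ennreal lam < mstar f \<omega>}"
proof -
  have "(\<exists>k. \<omega> \<in> exit_set lam k) \<longleftrightarrow> \<omega> \<in> space M \<and> (\<exists>j. lam < norm (f j \<omega> - f 0 \<omega>))" for \<omega>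
    using ex_first_exit_iff[of lam "\<lambda>j. norm (f j \<omega> - f 0 \<omega>)"] by (auto simp: exit_set_def)
  then show ?thesis unfolding less_mstar_iff[OF assms] by (auto simp: set_eq_iff)
qed

lemma exit_set_0: "0 \<le> lam \<Longrightarrow> exit_set lam 0 = {}"
  by (simp add: exit_set_def first_exit_def)

end

section \<open>Truncated tail martingales\<close>

locale truncated_cond_symmetric_seq = cond_symmetric_seq M f
  for M :: "'w measure" and f :: "nat \<Rightarrow> 'w \<Rightarrow> 'x::{banach,second_countable_topology}" +
  fixes p c :: real
  assumes one_le_p: "1 \<le> p" and c_pos: "0 < c"
begin

definition trunc_diff :: "nat \<Rightarrow> 'w \<Rightarrow> 'x" where
  "trunc_diff i \<omega> = (if pvar_le p c i (diffs \<omega>) then mdiff f i \<omega> else 0)"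

text \<open>At time 0 nothing is revealed, as filtrations must start trivial.\<close>
definition observed :: "nat \<Rightarrow> 'w \<Rightarrow> (nat \<Rightarrow> 'x) \<times> real" where
  "observed n \<omega> = (seq_prefix n (diffs \<omega>), if n = 0 then 0 else norm (mdiff f (Suc n) \<omega>))"

definition obs_filtration :: "nat \<Rightarrow> 'w measure" where
  "obs_filtration n = vimage_algebra (space M) (observed n) borel"

definition tail_sum :: "nat \<Rightarrow> nat \<Rightarrow> 'w \<Rightarrow> 'x" where
  "tail_sum k n \<omega> = (\<Sum>i\<in>{Suc k..n}. trunc_diff i \<omega>)"

definition tail_weight :: "nat \<Rightarrow> nat \<Rightarrow> 'w \<Rightarrow> real" where
  "tail_weight k n \<omega> = (if k < n then norm (trunc_diff n \<omega>) else 0)"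

lemma borel_measurable_trunc_diff[measurable]: "trunc_diff i \<in> borel_measurable M"
  unfolding trunc_diff_def[abs_def] by measurable

lemma borel_measurable_tail_sum[measurable]: "tail_sum k n \<in> borel_measurable M"
  unfolding tail_sum_def[abs_def] by measurable

lemma borel_measurable_tail_weight[measurable]: "tail_weight k n \<in> borel_measurable M"
  unfolding tail_weight_def[abs_def] by measurable

lemma borel_measurable_observed[measurable]: "observed n \<in> borel_measurable M"
  unfolding observed_def[abs_def] by measurable

lemma norm_trunc_diff_le: "norm (trunc_diff i \<omega>) \<le> max 1 c"
proof (cases "pvar_le p c i (diffs \<omega>) \<and> 1 \<le> i")
  case True
  have "norm (mdiff f i \<omega>) powr p \<le> (\<Sum>l\<in>{1..i}. norm (mdiff f l \<omega>) powr p)"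
    using True by (intro member_le_sum) auto
  also have "\<dots> \<le> c" using True by (simp add: pvar_le_def diffs_def)
  finally have "norm (mdiff f i \<omega>) powr p \<le> c" .
  moreover have "norm (mdiff f i \<omega>) powr 1 \<le> norm (mdiff f i \<omega>) powr p" if "1 < norm (mdiff f i \<omega>)"
    using one_le_p that by (intro powr_mono) auto
  ultimately show ?thesis by (fastforce simp: trunc_diff_def le_max_iff_disj)
next
  case False
  then have "trunc_diff i \<omega> = 0" by (cases i) (auto simp: trunc_diff_def mdiff_def)
  then show ?thesis by simp
qed

lemma norm_tail_sum_le: "norm (tail_sum k n \<omega>) \<le> real (n - k) * max 1 c"
proof -
  have "norm (tail_sum k n \<omega>) \<le> (\<Sum>i\<in>{Suc k..n}. norm (trunc_diff i \<omega>))"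
    unfolding tail_sum_def by (rule norm_sum)
  also have "\<dots> \<le> real (card {Suc k..n}) * max 1 c"
    by (rule sum_bounded_above) (rule norm_trunc_diff_le)
  finally show ?thesis by simp
qed

lemma mdiff_tail_sum: "1 \<le> j \<Longrightarrow> mdiff (tail_sum k) j \<omega> = (if k < j then trunc_diff j \<omega> else 0)"
  by (cases j) (auto simp: mdiff_def tail_sum_def)

lemma sum_tail_weight_powr_le: "(\<Sum>j. ennreal (tail_weight k (Suc j) \<omega> powr p)) \<le> ennreal c"
proof -
  define a where "a i = (if pvar_le p c i (diffs \<omega>) then norm (diffs \<omega> i) powr p else 0)" for i
  have "(\<Sum>j<N. ennreal (tail_weight k (Suc j) \<omega> powr p)) \<le> ennreal c" for N
  proof -
    have "(\<Sum>j<N. ennreal (tail_weight k (Suc j) \<omega> powr p)) \<le> (\<Sum>j<N. ennreal (a (Suc j)))"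
      by (intro sum_mono ennreal_leI) (auto simp: tail_weight_def trunc_diff_def a_def diffs_def)
    also have "\<dots> = ennreal (\<Sum>i\<in>{1..N}. a i)"
      by (subst sum_ennreal) (auto simp: a_def sum.atLeast1_atMost_eq)
    also have "\<dots> \<le> ennreal c"
      using sum_pvar_le_powr_le[where N=N and x="diffs \<omega>" and p=p] c_pos by (intro ennreal_leI) (simp add: a_def)
    finally show ?thesis .
  qed
  then show ?thesis by (simp add: suminf_eq_SUP SUP_least)
qed

lemma space_obs_filtration[simp]: "space (obs_filtration n) = space M"
  by (simp add: obs_filtration_def)

lemma sets_obs_filtration_subset: "sets (obs_filtration n) \<subseteq> sets M"
  unfolding obs_filtration_def by (rule sets_image_in_sets) simp_all

lemma measurable_obs_filtrationI:
  assumes \<Psi>: "\<Psi> \<in> borel_measurable borel" and g: "\<And>\<omega>. \<omega> \<in> space M \<Longrightarrow> g \<omega> = \<Psi> (observed n \<omega>)"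
  shows "g \<in> borel_measurable (obs_filtration n)"
proof -
  have "observed n \<in> measurable (obs_filtration n) borel"
    unfolding obs_filtration_def by (rule measurable_vimage_algebra1) simp
  from measurable_compose[OF this \<Psi>] show ?thesis
    by (subst measurable_cong[where g="\<lambda>\<omega>. \<Psi> (observed n \<omega>)"]) (simp_all add: g)
qed

lemma obs_filtration_mono: "sets (obs_filtration n) \<subseteq> sets (obs_filtration (Suc n))"
proof -
  define \<Theta> where "\<Theta> z = (seq_prefix n (fst z), if n = 0 then 0 else norm (fst z (Suc n)))"
    for z :: "(nat \<Rightarrow> 'x) \<times> real"
  have "(\<lambda>z. seq_prefix n (fst z)) \<in> borel_measurable (borel :: ((nat \<Rightarrow> 'x) \<times> real) measure)"
    by (rule measurable_compose[OF borel_measurable_fst_borel, of "seq_prefix n"]) measurable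
  moreover have "(\<lambda>z. if n = 0 then 0 else norm (fst z (Suc n)))
      \<in> borel_measurable (borel :: ((nat \<Rightarrow> 'x) \<times> real) measure)"
    by (rule measurable_compose[OF borel_measurable_fst_borel, of "\<lambda>x. if n = 0 then 0 else norm (x (Suc n))"])
      measurable
  ultimately have "\<Theta> \<in> borel_measurable borel"
    unfolding \<Theta>_def by (rule borel_measurable_Pair)
  moreover have "observed n \<omega> = \<Theta> (observed (Suc n) \<omega>)" for \<omega>
    by (simp add: \<Theta>_def observed_def seq_prefix_seq_prefix seq_prefix_apply diffs_def)
  ultimately have "observed n \<in> measurable (obs_filtration (Suc n)) borel"
    by (rule measurable_obs_filtrationI)
  then show ?thesis unfolding obs_filtration_def[of n] by (rule sets_image_in_sets[rotated]) simp
qed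

lemma sets_obs_filtration_0: "sets (obs_filtration 0) = {{}, space M}"
proof -
  let ?z = "((\<lambda>_. 0) :: nat \<Rightarrow> 'x, 0 :: real)"
  have "observed 0 = (\<lambda>\<omega>. ?z)" by (simp add: fun_eq_iff observed_def seq_prefix_def)
  then have "sets (obs_filtration 0) = {(\<lambda>\<omega>. ?z) -` A \<inter> space M | A. A \<in> sets borel}"
    unfolding obs_filtration_def by (simp add: sets_vimage_algebra2)
  also have "\<dots> = {{}, space M}"
  proof (intro equalityI subsetI)
    fix S assume "S \<in> {(\<lambda>\<omega>. ?z) -` A \<inter> space M | A. A \<in> sets borel}"
    then obtain A where "S = (\<lambda>\<omega>. ?z) -` A \<inter> space M" by blast
    then show "S \<in> {{}, space M}" by (cases "?z \<in> A") auto
  next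
    fix S assume "S \<in> {{}, space M}"
    then consider "S = {}" | "S = space M" by blast
    then show "S \<in> {(\<lambda>\<omega>. ?z) -` A \<inter> space M | A. A \<in> sets borel}"
    proof cases
      case 1
      then show ?thesis by (intro CollectI exI[of _ "{}"]) simp
    next
      case 2
      then show ?thesis by (intro CollectI exI[of _ UNIV]) simp
    qed
  qed
  finally show ?thesis .
qed

lemma filtration_on_obs_filtration:
  assumes "sets N = sets M"
  shows "filtration_on N obs_filtration"
  using sets_obs_filtration_subset obs_filtration_mono sets_obs_filtration_0
    assms sets_eq_imp_space_eq[OF assms]
  by (simp add: filtration_on_def)

lemma tail_sum_adapted: "tail_sum k n \<in> borel_measurable (obs_filtration n)"
proof -
  define \<Gamma> where "\<Gamma> x = (\<Sum>i\<in>{Suc k..n}. if pvar_le p c i x then x i else 0)" for x :: "nat \<Rightarrow> 'x"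
  have "\<Gamma> \<in> borel_measurable borel" unfolding \<Gamma>_def[abs_def] by measurable
  then have "(\<lambda>z. \<Gamma> (fst z)) \<in> borel_measurable (borel :: ((nat \<Rightarrow> 'x) \<times> real) measure)"
    by (rule measurable_compose[OF borel_measurable_fst_borel])
  moreover have "tail_sum k n \<omega> = \<Gamma> (fst (observed n \<omega>))" for \<omega>
    unfolding \<Gamma>_def tail_sum_def trunc_diff_def observed_def
    by (intro sum.cong) (auto simp: pvar_le_seq_prefix seq_prefix_apply diffs_def)
  ultimately show ?thesis by (rule measurable_obs_filtrationI)
qed

lemma tail_weight_predictable:
  assumes "1 \<le> k"
  shows "tail_weight k (Suc m) \<in> borel_measurable (obs_filtration m)"
proof -
  define \<Psi> where "\<Psi> z = (if k < Suc m \<and> pvar_le_next p c m z then snd z else 0)"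
    for z :: "(nat \<Rightarrow> 'x) \<times> real"
  have "\<Psi> \<in> borel_measurable borel" unfolding \<Psi>_def[abs_def]
    by (rule measurable_If[OF borel_measurable_snd_borel borel_measurable_const]) simp
  moreover have "tail_weight k (Suc m) \<omega> = \<Psi> (observed m \<omega>)" for \<omega>
    using assms pvar_le_next_seq_prefix[of p c m "diffs \<omega>"]
    by (auto simp: \<Psi>_def tail_weight_def trunc_diff_def observed_def diffs_def)
  ultimately show ?thesis by (rule measurable_obs_filtrationI)
qed

lemma integral_indicator_trunc_diff_eq_0:
  assumes [measurable]: "Measurable.pred borel Q" and kn: "k \<le> n"
    and B: "B \<in> sets (obs_filtration n)"
  shows "(\<integral>\<omega>. (indicator {\<omega>\<in>space M. Q (seq_prefix k (diffs \<omega>))} \<omega> * indicator B \<omega>)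
            *\<^sub>R trunc_diff (Suc n) \<omega> \<partial>M) = 0"
proof -
  obtain S where [measurable]: "S \<in> sets borel" and BS: "B = observed n -` S \<inter> space M"
    using B unfolding obs_filtration_def by (auto simp: sets_vimage_algebra2)
  define \<Theta> where "\<Theta> z = (fst z, if n = 0 then 0 else snd z)" for z :: "(nat \<Rightarrow> 'x) \<times> real"
  define G where "G z = indicator {y. Q (seq_prefix k y)} (fst z) * indicator S (\<Theta> z)
      * (if pvar_le_next p c n z then 1 else 0 :: real)" for z
  have [measurable]: "\<Theta> \<in> borel_measurable borel"
    unfolding \<Theta>_def by (intro borel_measurable_Pair) simp_all
  have [measurable]: "(\<lambda>z. indicator {y. Q (seq_prefix k y)} (fst z) :: real)
      \<in> borel_measurable (borel :: ((nat \<Rightarrow> 'x) \<times> real) measure)"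
    by (rule measurable_compose[OF borel_measurable_fst_borel, of "indicator {y. Q (seq_prefix k y)}"])
      measurable
  have "G \<in> borel_measurable borel" unfolding G_def[abs_def] by measurable
  moreover have "(indicator {\<omega>\<in>space M. Q (seq_prefix k (diffs \<omega>))} \<omega> * indicator B \<omega>) *\<^sub>R trunc_diff (Suc n) \<omega>
      = G (seq_prefix n (diffs \<omega>), norm (diffs \<omega> (Suc n))) *\<^sub>R diffs \<omega> (Suc n)" if "\<omega> \<in> space M" for \<omega>
    using that kn pvar_le_next_seq_prefix[of p c n "diffs \<omega>"]
    by (simp add: G_def \<Theta>_def BS observed_def trunc_diff_def seq_prefix_seq_prefix indicator_def diffs_def)
  ultimately show ?thesis
    using integral_next_diff_eq_0 by (simp cong: Bochner_Integration.integral_cong)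
qed

lemma martingale_on_tail_sum:
  assumes [measurable]: "Measurable.pred borel Q"
    and A: "A = {\<omega>\<in>space M. Q (seq_prefix k (diffs \<omega>))}" and P: "0 < prob A"
  shows "martingale_on (uniform_measure M A) obs_filtration (tail_sum k)"
  unfolding martingale_on_def
proof (intro allI conjI ballI)
  have Aev: "A \<in> events" unfolding A by measurable
  fix n
  show "tail_sum k n \<in> borel_measurable (obs_filtration n)" by (rule tail_sum_adapted)
  show "integrable (uniform_measure M A) (tail_sum k n)"
    by (rule integrable_uniform_measure_bounded[OF Aev P _ norm_tail_sum_le]) simp
  fix B assume B: "B \<in> sets (obs_filtration n)"
  then have [measurable]: "B \<in> sets M" using sets_obs_filtration_subset by blast
  define inc where "inc \<omega> = (if k < Suc n then trunc_diff (Suc n) \<omega> else 0)" for \<omega>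
  have [measurable]: "inc \<in> borel_measurable M" unfolding inc_def[abs_def] by measurable
  have int_tail: "integrable (uniform_measure M A) (\<lambda>\<omega>. indicator B \<omega> *\<^sub>R tail_sum k n \<omega>)"
    by (rule integrable_uniform_measure_bounded[OF Aev P, where B="real (n - k) * max 1 c"])
      (simp, auto simp: indicator_def norm_tail_sum_le)
  have int_inc: "integrable (uniform_measure M A) (\<lambda>\<omega>. indicator B \<omega> *\<^sub>R inc \<omega>)"
    by (rule integrable_uniform_measure_bounded[OF Aev P, where B="max 1 c"])
      (simp, auto simp: inc_def indicator_def norm_trunc_diff_le)
  have "(\<integral>\<omega>. indicator B \<omega> *\<^sub>R inc \<omega> \<partial>uniform_measure M A) = 0"
  proof (cases "k < Suc n")
    case True
    have "(\<integral>\<omega>. indicator B \<omega> *\<^sub>R inc \<omega> \<partial>uniform_measure M A)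
        = (1 / prob A) *\<^sub>R (\<integral>\<omega>. (indicator A \<omega> * indicator B \<omega>) *\<^sub>R trunc_diff (Suc n) \<omega> \<partial>M)"
      using True by (simp add: integral_uniform_measure[OF Aev P] inc_def flip: integral_scaleR_right)
    also have "\<dots> = 0"
      using integral_indicator_trunc_diff_eq_0[of Q k n B] True B by (simp add: A)
    finally show ?thesis .
  qed (simp add: inc_def)
  moreover have "indicator B \<omega> *\<^sub>R tail_sum k (Suc n) \<omega> = indicator B \<omega> *\<^sub>R tail_sum k n \<omega> + indicator B \<omega> *\<^sub>R inc \<omega>"
    for \<omega> by (simp add: tail_sum_def inc_def scaleR_add_right)
  ultimately show "set_lebesgue_integral (uniform_measure M A) B (tail_sum k (Suc n))
      = set_lebesgue_integral (uniform_measure M A) B (tail_sum k n)"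
    by (simp add: set_lebesgue_integral_def Bochner_Integration.integral_add[OF int_tail int_inc])
qed


lemma azuma_tail_sum_uniform_measure:
  assumes [measurable]: "Measurable.pred borel Q"
    and A: "A = {\<omega>\<in>space M. Q (seq_prefix k (diffs \<omega>))}" and P: "0 < prob A" and k: "1 \<le> k"
    and K: "azuma_K TYPE('w) TYPE('x) p K" and r: "0 < r"
  shows "measure (uniform_measure M A) {\<omega>\<in>space M. ennreal r \<le> mstar (tail_sum k) \<omega>}
      \<le> 2 * exp (- (r powr p) / (K * c))"
proof -
  let ?U = "uniform_measure M A"
  let ?W = "\<lambda>\<omega>. \<Sum>j. ennreal (tail_weight k (Suc j) \<omega> powr p)"
  have U: "prob_space ?U"
    using P by (intro prob_space_uniform_measure) (auto simp: A emeasure_eq_measure)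
  have filt: "filtration_on ?U obs_filtration" by (rule filtration_on_obs_filtration) simp
  have mart: "martingale_on ?U obs_filtration (tail_sum k)"
    by (rule martingale_on_tail_sum[OF _ A P]) simp
  have pred: "tail_weight k j \<in> borel_measurable (obs_filtration (j - 1))" if "1 \<le> j" for j
    using tail_weight_predictable[OF k, of "j - 1"] that by simp
  have bound: "AE \<omega> in ?U. norm (mdiff (tail_sum k) j \<omega>) \<le> tail_weight k j \<omega>" if "1 \<le> j" for j
    using that by (simp add: mdiff_tail_sum tail_weight_def)
  have "measure ?U {\<omega>\<in>space ?U. ennreal r \<le> mstar (tail_sum k) \<omega>} \<le> azuma_bound p K (esssup ?U ?W) r"
    by (rule azuma_KD[OF K U filt mart pred _ bound r]) (auto simp: tail_weight_def)
  also have "\<dots> \<le> 2 * exp (- (r powr p) / (K * c))"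
  proof (rule azuma_bound_le)
    have "?W \<in> borel_measurable ?U" by measurable
    then show "esssup ?U ?W \<le> ennreal c"
      by (rule esssup_I) (intro AE_I2 sum_tail_weight_powr_le)
  qed (use c_pos azuma_K_pos[OF K] in auto)
  finally show ?thesis by simp
qed

lemma azuma_tail_sum:
  assumes [measurable]: "Measurable.pred borel Q"
    and A: "A = {\<omega>\<in>space M. Q (seq_prefix k (diffs \<omega>))}" and k: "1 \<le> k"
    and K: "azuma_K TYPE('w) TYPE('x) p K" and r: "0 < r"
  shows "measure M (A \<inter> {\<omega>\<in>space M. ennreal r \<le> mstar (tail_sum k) \<omega>})
      \<le> 2 * exp (- (r powr p) / (K * c)) * prob A"
proof -
  have Aev: "A \<in> events" unfolding A by measurable
  let ?X = "{\<omega>\<in>space M. ennreal r \<le> mstar (tail_sum k) \<omega>}"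
  have [measurable]: "?X \<in> sets M" unfolding mstar_def by measurable
  consider "prob A = 0" | "0 < prob A" using measure_nonneg[of M A] by linarith
  then show ?thesis
  proof cases
    case 1
    have "prob (A \<inter> ?X) \<le> prob A" using Aev by (intro finite_measure_mono) auto
    then show ?thesis using 1 by simp
  next
    case 2
    then have "measure (uniform_measure M A) ?X = prob (A \<inter> ?X) / prob A"
      using Aev by (intro measure_uniform_measure) (auto simp: emeasure_eq_measure)
    then show ?thesis
      using azuma_tail_sum_uniform_measure[OF _ A 2 k K r] 2 by (simp add: pos_divide_le_eq)
  qed
qed

lemma tail_sum_overshoot:
  assumes c: "c = d powr p" and d: "0 \<le> d" and Sp: "Sp p f \<omega> \<le> ennreal d"
    and exit: "first_exit lam k (\<lambda>j. norm (f j \<omega> - f 0 \<omega>))" and k: "0 < k"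
    and b: "ennreal b < mstar f \<omega>" "0 \<le> b" "lam + d \<le> b"
  shows "ennreal (b - lam - d) \<le> mstar (tail_sum k) \<omega>"
proof -
  have pvar: "pvar_le p c i (diffs \<omega>)" for i
  proof -
    have "(\<Sum>l\<in>{1..i}. norm (mdiff f l \<omega>) powr p) \<le> d powr p"
      using sum_norm_mdiff_powr_le_if_Sp_le[OF _ d Sp] one_le_p by simp
    then show ?thesis by (simp add: pvar_le_def diffs_def c)
  qed
  have "norm (mdiff f k \<omega>) powr p \<le> (\<Sum>l\<in>{1..k}. norm (mdiff f l \<omega>) powr p)"
    using k by (intro member_le_sum) auto
  also have "\<dots> \<le> d powr p" using pvar[of k] by (simp add: pvar_le_def diffs_def c)
  finally have jump_powr: "norm (mdiff f k \<omega>) powr p \<le> d powr p" .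
  have jump: "norm ((f k \<omega> - f 0 \<omega>) - (f (k - 1) \<omega> - f 0 \<omega>)) \<le> d"
  proof (rule ccontr)
    assume "\<not> ?thesis"
    then have "d powr p < norm (mdiff f k \<omega>) powr p"
      using one_le_p d by (intro powr_less_mono2) (auto simp: mdiff_def)
    with jump_powr show False by linarith
  qed
  obtain m where m: "b < norm (f m \<omega> - f 0 \<omega>)"
    using less_mstar_iff[OF b(2), THEN iffD1, OF b(1)] ..
  have "k < m \<and> b - lam - d < norm ((f m \<omega> - f 0 \<omega>) - (f k \<omega> - f 0 \<omega>))"
    by (rule first_exit_overshoot[OF exit k jump m b(3)])
  moreover have "tail_sum k m \<omega> - tail_sum k 0 \<omega> = f m \<omega> - f k \<omega>" if "k \<le> m"
    using pvar that by (simp add: tail_sum_def trunc_diff_def sum_mdiff)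
  ultimately have "ennreal (b - lam - d) \<le> ennreal (norm (tail_sum k m \<omega> - tail_sum k 0 \<omega>))"
    by (intro ennreal_leI) simp
  also have "\<dots> \<le> mstar (tail_sum k) \<omega>" unfolding mstar_def by (rule SUP_upper) simp
  finally show ?thesis .
qed


lemma measure_overshoot_on_exit_set_le:
  assumes c: "c = d powr p" and d: "0 \<le> d" and K: "azuma_K TYPE('w) TYPE('x) p K"
    and lam: "0 \<le> lam" and b: "0 \<le> b" "0 < b - lam - d"
  shows "measure M (exit_set lam k \<inter> {\<omega>\<in>space M. ennreal b < mstar f \<omega> \<and> Sp p f \<omega> \<le> ennreal d})
      \<le> 2 * exp (- ((b - lam - d) powr p) / (K * c)) * measure M (exit_set lam k)"
proof (cases "k = 0")
  case False
  let ?r = "b - lam - d"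
  have "exit_set lam k \<inter> {\<omega>\<in>space M. ennreal b < mstar f \<omega> \<and> Sp p f \<omega> \<le> ennreal d}
      \<subseteq> exit_set lam k \<inter> {\<omega>\<in>space M. ennreal ?r \<le> mstar (tail_sum k) \<omega>}"
    using tail_sum_overshoot[OF c d] False b by (auto simp: exit_set_def)
  then have "measure M (exit_set lam k \<inter> {\<omega>\<in>space M. ennreal b < mstar f \<omega> \<and> Sp p f \<omega> \<le> ennreal d})
      \<le> measure M (exit_set lam k \<inter> {\<omega>\<in>space M. ennreal ?r \<le> mstar (tail_sum k) \<omega>})"
    by (intro finite_measure_mono) (auto simp: mstar_def)
  also have "\<dots> \<le> 2 * exp (- (?r powr p) / (K * c)) * measure M (exit_set lam k)"
    using False b
    by (intro azuma_tail_sum[OF pred_first_exit_partial_sums exit_set_eq_seq_prefix _ K]) simp_all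
  finally show ?thesis .
qed (simp add: exit_set_0 lam)

end

section \<open>The good-lambda inequality\<close>

lemma (in cond_symmetric_seq) good_lambda_inequality:
  assumes p: "1 \<le> p" and K: "azuma_K TYPE('w) TYPE('x) p K"
    and lam: "0 < lam" and \<delta>: "0 < \<delta>" and \<beta>\<delta>: "\<delta> < \<beta> - 1"
  shows "measure M {\<omega>\<in>space M. ennreal (\<beta> * lam) < mstar f \<omega> \<and> Sp p f \<omega> \<le> ennreal (\<delta> * lam)}
     \<le> 2 * exp (- ((\<beta> - 1 - \<delta>) powr p) / (K * \<delta> powr p)) * measure M {\<omega>\<in>space M. ennreal lam < mstar f \<omega>}"
proof -
  define c where "c = (\<delta> * lam) powr p"
  interpret truncated_cond_symmetric_seq M f p c
    using p \<delta> lam by unfold_locales (simp_all add: c_def)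
  define E where "E = {\<omega>\<in>space M. ennreal (\<beta> * lam) < mstar f \<omega> \<and> Sp p f \<omega> \<le> ennreal (\<delta> * lam)}"
  define B where "B = 2 * exp (- ((\<beta> - 1 - \<delta>) powr p) / (K * \<delta> powr p))"
  have r: "\<beta> * lam - lam - \<delta> * lam = (\<beta> - 1 - \<delta>) * lam" "0 < (\<beta> - 1 - \<delta>) * lam"
    using \<beta>\<delta> lam by (simp add: algebra_simps, simp)
  have "0 < \<delta> * lam" using \<delta> lam by simp
  then have lam_less: "lam < \<beta> * lam" and \<beta>_pos: "0 < \<beta> * lam" using r lam by linarith+
  have [measurable]: "E \<in> events" unfolding E_def mstar_def Sp_def Let_def by measurable
  have "E \<subseteq> {\<omega>\<in>space M. ennreal lam < mstar f \<omega>}"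
    using \<beta>_pos lam by (auto simp: E_def less_mstar_iff intro: less_trans[OF lam_less])
  then have E_sub: "E \<subseteq> (\<Union>k. exit_set lam k)" using Union_exit_set lam by simp
  have "(((\<beta> - 1 - \<delta>) * lam) powr p) / (K * c) = (\<beta> - 1 - \<delta>) powr p / (K * \<delta> powr p)"
    using \<beta>\<delta> \<delta> lam by (simp add: c_def powr_mult)
  then have "measure M (E \<inter> exit_set lam k) \<le> B * measure M (exit_set lam k)" for k
    using measure_overshoot_on_exit_set_le[OF c_def _ K, of lam "\<beta> * lam" k] \<delta> lam \<beta>_pos r
    by (simp add: E_def B_def Int_commute)
  then have "measure M E \<le> B * measure M (\<Union>k. exit_set lam k)"
    by (intro measure_le_mult_if_disjoint_cover[OF disjoint_family_exit_set _ _ E_sub]) simp_all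
  then show ?thesis using Union_exit_set lam by (simp add: E_def B_def)
qed

theorem lemma3p9:
  fixes M :: "'w measure" and F :: "nat \<Rightarrow> 'w measure"
    and f :: "nat \<Rightarrow> 'w \<Rightarrow> 'x::{banach,second_countable_topology}"
    and p \<beta> \<delta> lam :: real
  assumes "1 < p" and "p \<le> 2"
    and "separable_space (euclidean :: 'x topology)"
    and "has_azuma_type TYPE('w) TYPE('x) p"
    and "prob_space M" and "filtration_on M F" and "martingale_on M F f"
    and "cond_symmetric M f"
    and "\<beta> > 0" and "0 < \<delta>" and "\<delta> < \<beta> - 1" and "lam > 0"
  shows "measure M {\<omega>\<in>space M. ennreal (\<beta> * lam) < mstar f \<omega> \<and> Sp p f \<omega> \<le> ennreal (\<delta> * lam)}
           \<le> 2 * exp (- ((\<beta> - 1 - \<delta>) powr p) / (azuma_const TYPE('w) TYPE('x) p * \<delta> powr p))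
             * measure M {\<omega>\<in>space M. ennreal lam < mstar f \<omega>}"
proof -
  have "f j \<in> borel_measurable M" for j
    using assms(7) by (auto simp: martingale_on_def intro: borel_measurable_integrable)
  then interpret cond_symmetric_seq M f
    using assms(5,8) by (simp add: cond_symmetric_seq_def cond_symmetric_seq_axioms_def)
  have "{K. azuma_K TYPE('w) TYPE('x) p K} \<noteq> {}"
    using assms(4) by (simp add: has_azuma_type_def)
  then show ?thesis
    unfolding azuma_const_def
  proof (rule le_exp_bound_at_Inf)
    show "measure M {\<omega>\<in>space M. ennreal (\<beta> * lam) < mstar f \<omega> \<and> Sp p f \<omega> \<le> ennreal (\<delta> * lam)}
        \<le> 2 * exp (- ((\<beta> - 1 - \<delta>) powr p) / (K * \<delta> powr p)) * measure M {\<omega>\<in>space M. ennreal lam < mstar f \<omega>}"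
      if "K \<in> {K. azuma_K TYPE('w) TYPE('x) p K}" for K
      using that good_lambda_inequality assms(1,10-12) by simp
  qed (use assms(10,11) azuma_K_pos in auto)
qed

end
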